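(* Let $(\mathcal{A}_\Lambda,\partial_\Lambda)$ be a filtered Chekanov–Eliashberg DGA over $\mathbb{Z}_2$ generated by $q_1,\dots,q_n$, let $k$ be a positive integer, and let $(S_k\mathcal{A}_\Lambda,\partial_\Lambda)$ be its grading-$k$ stabilization, with additional generators $e_k,e_{k-1}$. Let $\delta>0$. If the height filtration of $\mathcal{A}_\Lambda$ is extended to $S_k\mathcal{A}_\Lambda$ in such a way that $0<h(e_k)-h(e_{k-1})<2\delta$, then the persistent linearized contact homologies of $(\mathcal{A}_\Lambda,\partial_\Lambda)$ and $(S_k\mathcal{A}_\Lambda,\partial_\Lambda)$ (with respect to an augmentation $\epsilon$ of $\mathcal{A}_\Lambda$ and its extension to $S_k\mathcal{A}_\Lambda$ by $\epsilon(e_k)=\epsilon(e_{k-1})=0$) are $2\delta$-interleaved.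
   Context: A filtered Chekanov–Eliashberg DGA: a Chekanov–Eliashberg DGA (free noncommutative graded algebra over $\mathbb{Z}_2$ on generators, with differential) together with heights $h(q_i)>0$, extended by $h(\text{word})=$ sum of letter heights and $h(\text{sum})=$ max, such that the differential strictly decreases height. The grading-$k$ stabilization $S_k\mathcal{A}_\Lambda$ is generated by $e_k,e_{k-1},q_1,\dots,q_n$ with $|e_k|=k$, $|e_{k-1}|=k-1$, other gradings unchanged, and differential $\partial(e_k)=e_{k-1}$, $\partial(e_{k-1})=0$, agreeing with $\partial_\Lambda$ on the $q_i$. The persistent linearized contact homology is $t\mapsto H_\ast(A^t,\partial_1^\epsilon)$, where $\partial_1^\epsilon$ is the linearized differential with respect to the augmentation $\epsilon$ on the vector space spanned by the generators and $A^t$ is spanned by generators of height $\le t$, with transfer maps induced by inclusion. Persistence modules $U^\bullet,V^\bullet$ are $2\delta$-interleaved if there are maps $\varphi^t:U^t\to V^{t+\delta}$, $\psi^t:V^t\to U^{t+\delta}$ commuting with transfer maps with $\psi^{t+\delta}\varphi^t$ and $\varphi^{t+\delta}\psi^t$ equal to the transfer maps from $t$ to $t+2\delta$. *)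

theory Defs
  imports Complex_Main
begin

text \<open>An element of the free noncommutative algebra over Z2 on generators of type 'g
  is a finite sum of words; we represent it as the (finite) set of words with coefficient 1.
  The empty word is the unit 1.\<close>

type_synonym 'g alg = "'g list set"

definition sdiff :: "'a set \<Rightarrow> 'a set \<Rightarrow> 'a set" where
  "sdiff A B = (A - B) \<union> (B - A)"

text \<open>Extension of the differential (given on generators) to words via the Leibniz rule
  (no signs over Z2): d(a1...am) = sum_j a1...a(j-1) d(aj) a(j+1)...am.\<close>

definition dword :: "('g \<Rightarrow> 'g alg) \<Rightarrow> 'g list \<Rightarrow> 'g alg" where
  "dword d w = {x. odd (card {(j, v). j < length w \<and> v \<in> d (w ! j) \<and>
                                   take j w @ v @ drop (Suc j) w = x})}"

definition dalg :: "('g \<Rightarrow> 'g alg) \<Rightarrow> 'g alg \<Rightarrow> 'g alg" where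
  "dalg d A = {x. odd (card {w \<in> A. x \<in> dword d w})}"

definition word_deg :: "('g \<Rightarrow> int) \<Rightarrow> 'g list \<Rightarrow> int" where
  "word_deg gr w = sum_list (map gr w)"

definition word_height :: "('g \<Rightarrow> real) \<Rightarrow> 'g list \<Rightarrow> real" where
  "word_height h w = sum_list (map h w)"

text \<open>A filtered Chekanov--Eliashberg DGA: finite generating set G, integer grading gr,
  differential d given on generators (degree -1, d o d = 0; on generators suffices since
  d o d is a derivation over Z2), positive heights h such that d strictly decreases height
  (height of a sum = max over its words, so every word must have smaller height).\<close>

definition filtered_CE_DGA ::
  "'g set \<Rightarrow> ('g \<Rightarrow> int) \<Rightarrow> ('g \<Rightarrow> 'g alg) \<Rightarrow> ('g \<Rightarrow> real) \<Rightarrow> bool" where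
  "filtered_CE_DGA G gr d h \<longleftrightarrow>
     finite G \<and>
     (\<forall>q\<in>G. finite (d q) \<and>
        (\<forall>w\<in>d q. set w \<subseteq> G \<and> word_deg gr w = gr q - 1 \<and> word_height h w < h q)) \<and>
     (\<forall>q\<in>G. 0 < h q) \<and>
     (\<forall>q\<in>G. dalg d (d q) = {})"

text \<open>Augmentation: graded unital algebra map to Z2 (given by its values on generators,
  nonzero only in degree 0) with eps o d = 0.\<close>

definition augmentation ::
  "'g set \<Rightarrow> ('g \<Rightarrow> int) \<Rightarrow> ('g \<Rightarrow> 'g alg) \<Rightarrow> ('g \<Rightarrow> bool) \<Rightarrow> bool" where
  "augmentation G gr d eps \<longleftrightarrow>
     (\<forall>q\<in>G. eps q \<longrightarrow> gr q = 0) \<and>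
     (\<forall>q\<in>G. even (card {w \<in> d q. \<forall>a\<in>set w. eps a}))"

text \<open>Vectors in the Z2 vector space spanned by the generators are finite sets of generators.
  The linearized differential of a generator q is the linear part of phi_eps(d q), where
  phi_eps(a) = a + eps(a).\<close>

definition lin_diff :: "('g \<Rightarrow> 'g alg) \<Rightarrow> ('g \<Rightarrow> bool) \<Rightarrow> 'g \<Rightarrow> 'g set" where
  "lin_diff d eps q = {p. odd (card {(w, j). w \<in> d q \<and> j < length w \<and> w ! j = p \<and>
                                      (\<forall>i < length w. i \<noteq> j \<longrightarrow> eps (w ! i))})}"

definition lin_map :: "('g \<Rightarrow> 'g alg) \<Rightarrow> ('g \<Rightarrow> bool) \<Rightarrow> 'g set \<Rightarrow> 'g set" where
  "lin_map d eps S = {p. odd (card {q \<in> S. p \<in> lin_diff d eps q})}"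

definition chains :: "'g set \<Rightarrow> ('g \<Rightarrow> int) \<Rightarrow> ('g \<Rightarrow> real) \<Rightarrow> int \<Rightarrow> real \<Rightarrow> 'g set set" where
  "chains G gr h m t = Pow {q \<in> G. gr q = m \<and> h q \<le> t}"

definition cycles ::
  "'g set \<Rightarrow> ('g \<Rightarrow> int) \<Rightarrow> ('g \<Rightarrow> 'g alg) \<Rightarrow> ('g \<Rightarrow> real) \<Rightarrow> ('g \<Rightarrow> bool) \<Rightarrow> int \<Rightarrow> real \<Rightarrow> 'g set set" where
  "cycles G gr d h eps m t = {S \<in> chains G gr h m t. lin_map d eps S = {}}"

definition bdries ::
  "'g set \<Rightarrow> ('g \<Rightarrow> int) \<Rightarrow> ('g \<Rightarrow> 'g alg) \<Rightarrow> ('g \<Rightarrow> real) \<Rightarrow> ('g \<Rightarrow> bool) \<Rightarrow> int \<Rightarrow> real \<Rightarrow> 'g set set" where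
  "bdries G gr d h eps m t = lin_map d eps ` chains G gr h (m + 1) t"

definition coset :: "'a set set \<Rightarrow> 'a set \<Rightarrow> 'a set set" where
  "coset B z = (\<lambda>b. sdiff z b) ` B"

definition lin_homology ::
  "'g set \<Rightarrow> ('g \<Rightarrow> int) \<Rightarrow> ('g \<Rightarrow> 'g alg) \<Rightarrow> ('g \<Rightarrow> real) \<Rightarrow> ('g \<Rightarrow> bool) \<Rightarrow> int \<Rightarrow> real
    \<Rightarrow> 'g set set set" where
  "lin_homology G gr d h eps m t = coset (bdries G gr d h eps m t) ` cycles G gr d h eps m t"

definition lin_transfer ::
  "'g set \<Rightarrow> ('g \<Rightarrow> int) \<Rightarrow> ('g \<Rightarrow> 'g alg) \<Rightarrow> ('g \<Rightarrow> real) \<Rightarrow> ('g \<Rightarrow> bool) \<Rightarrow> int \<Rightarrow> real \<Rightarrow> real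
    \<Rightarrow> 'g set set \<Rightarrow> 'g set set" where
  "lin_transfer G gr d h eps m t t' c = (\<Union>z\<in>c. coset (bdries G gr d h eps m t') z)"

definition cadd :: "'a set set \<Rightarrow> 'a set set \<Rightarrow> 'a set set" where
  "cadd c1 c2 = {sdiff x y | x y. x \<in> c1 \<and> y \<in> c2}"

definition additive_on :: "'a set set set \<Rightarrow> ('a set set \<Rightarrow> 'b set set) \<Rightarrow> bool" where
  "additive_on H f \<longleftrightarrow> (\<forall>c1\<in>H. \<forall>c2\<in>H. f (cadd c1 c2) = cadd (f c1) (f c2))"

text \<open>Persistence modules (H,T) and (H',T') are 2 delta-interleaved (shift delta).
  Linear maps over Z2 are exactly additive maps.\<close>
definition interleaved ::
  "real \<Rightarrow> (real \<Rightarrow> 'a set set set) \<Rightarrow> (real \<Rightarrow> real \<Rightarrow> 'a set set \<Rightarrow> 'a set set)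
        \<Rightarrow> (real \<Rightarrow> 'b set set set) \<Rightarrow> (real \<Rightarrow> real \<Rightarrow> 'b set set \<Rightarrow> 'b set set) \<Rightarrow> bool" where
  "interleaved \<delta> H T H' T' \<longleftrightarrow>
    (\<exists>\<phi> \<psi>.
      (\<forall>t. (\<forall>c\<in>H t. \<phi> t c \<in> H' (t + \<delta>)) \<and> additive_on (H t) (\<phi> t)) \<and>
      (\<forall>t. (\<forall>c\<in>H' t. \<psi> t c \<in> H (t + \<delta>)) \<and> additive_on (H' t) (\<psi> t)) \<and>
      (\<forall>t t'. t \<le> t' \<longrightarrow> (\<forall>c\<in>H t. \<phi> t' (T t t' c) = T' (t + \<delta>) (t' + \<delta>) (\<phi> t c))) \<and>
      (\<forall>t t'. t \<le> t' \<longrightarrow> (\<forall>c\<in>H' t. \<psi> t' (T' t t' c) = T (t + \<delta>) (t' + \<delta>) (\<psi> t c))) \<and>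
      (\<forall>t. \<forall>c\<in>H t. \<psi> (t + \<delta>) (\<phi> t c) = T t (t + 2 * \<delta>) c) \<and>
      (\<forall>t. \<forall>c\<in>H' t. \<phi> (t + \<delta>) (\<psi> t c) = T' t (t + 2 * \<delta>) c))"

text \<open>Generators of S_k A: Inl q for the original q, Inr True = e_k, Inr False = e_(k-1).\<close>

definition stab_gens :: "'g set \<Rightarrow> ('g + bool) set" where
  "stab_gens G = Inl ` G \<union> {Inr True, Inr False}"

definition stab_grading :: "('g \<Rightarrow> int) \<Rightarrow> int \<Rightarrow> ('g + bool) \<Rightarrow> int" where
  "stab_grading gr k x = (case x of Inl q \<Rightarrow> gr q | Inr b \<Rightarrow> (if b then k else k - 1))"

definition stab_diff :: "('g \<Rightarrow> 'g alg) \<Rightarrow> ('g + bool) \<Rightarrow> ('g + bool) alg" where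
  "stab_diff d x = (case x of Inl q \<Rightarrow> map Inl ` d q
                            | Inr b \<Rightarrow> (if b then {[Inr False]} else {}))"

definition stab_aug :: "('g \<Rightarrow> bool) \<Rightarrow> ('g + bool) \<Rightarrow> bool" where
  "stab_aug eps x = (case x of Inl q \<Rightarrow> eps q | Inr _ \<Rightarrow> False)"

end

theory Submission
  imports Defs
begin

text \<open>The inclusion \<open>q \<mapsto> q\<close> of \<open>\<A>\<^sub>\<Lambda>\<close> into \<open>S\<^sub>k\<A>\<^sub>\<Lambda>\<close> and the projection
  killing \<open>e\<^sub>k, e\<^sub>k\<^sub>-\<^sub>1\<close> are linearized chain maps that do not increase height, so each
  induces a \<open>\<delta>\<close>-shifted morphism of persistence modules. Projection after inclusion is the
  identity. Inclusion after projection changes a cycle \<open>z\<close> of \<open>S\<^sub>k\<A>\<^sub>\<Lambda>\<close> only by its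
  \<open>e\<close>-part; since \<open>e\<^sub>k\<close> is the only generator whose differential hits \<open>e\<^sub>k\<^sub>-\<^sub>1\<close>,
  a cycle never contains \<open>e\<^sub>k\<close>, and if it contains \<open>e\<^sub>k\<^sub>-\<^sub>1\<close> then \<open>e\<^sub>k\<^sub>-\<^sub>1 = \<partial>e\<^sub>k\<close>
  is a boundary at level \<open>h(e\<^sub>k) < h(e\<^sub>k\<^sub>-\<^sub>1) + 2\<delta> \<le> t + 2\<delta>\<close>.\<close>

lemma sdiff_self [simp]: "sdiff a a = {}"
  by (auto simp: sdiff_def)

definition Z2_subspace :: "'a set set \<Rightarrow> bool" where
  "Z2_subspace B \<longleftrightarrow> {} \<in> B \<and> (\<forall>x\<in>B. \<forall>y\<in>B. sdiff x y \<in> B)"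

definition Z2_linear :: "('a set \<Rightarrow> 'b set) \<Rightarrow> bool" where
  "Z2_linear f \<longleftrightarrow> (\<forall>A C. f (sdiff A C) = sdiff (f A) (f C))"

lemma Z2_linear_empty: "Z2_linear f \<Longrightarrow> f {} = {}"
  by (metis Z2_linear_def sdiff_self)

lemma Z2_linear_id: "Z2_linear id"
  by (simp add: Z2_linear_def)

lemma Z2_linear_image_Inl: "Z2_linear (image Inl)"
  by (auto simp: Z2_linear_def sdiff_def)

lemma Z2_linear_vimage_Inl: "Z2_linear (vimage Inl)"
  by (auto simp: Z2_linear_def sdiff_def)

lemma mem_coset_self: "{} \<in> B \<Longrightarrow> z \<in> coset B z"
  by (force simp: coset_def sdiff_def)

lemma coset_sdiff_member:
  assumes "Z2_subspace B" "b \<in> B"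
  shows "coset B (sdiff z b) = coset B z"
proof (intro subset_antisym subsetI)
  have closed: "sdiff b b' \<in> B" if "b' \<in> B" for b'
    using assms that by (simp add: Z2_subspace_def)
  fix x
  assume "x \<in> coset B (sdiff z b)"
  then obtain b' where "b' \<in> B" "x = sdiff z (sdiff b b')"
    by (auto simp: coset_def sdiff_def)
  then show "x \<in> coset B z"
    using closed unfolding coset_def by blast
next
  fix x
  assume "x \<in> coset B z"
  then obtain b' where "b' \<in> B" "x = sdiff (sdiff z b) (sdiff b b')"
    by (auto simp: coset_def sdiff_def)
  then show "x \<in> coset B (sdiff z b)"
    using assms unfolding coset_def Z2_subspace_def by blast
qed

lemma cadd_coset:
  assumes "Z2_subspace B"
  shows "cadd (coset B z1) (coset B z2) = coset B (sdiff z1 z2)"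
proof
  show "cadd (coset B z1) (coset B z2) \<subseteq> coset B (sdiff z1 z2)"
  proof
    fix x assume "x \<in> cadd (coset B z1) (coset B z2)"
    then obtain b1 b2 where b: "b1 \<in> B" "b2 \<in> B" "x = sdiff (sdiff z1 b1) (sdiff z2 b2)"
      by (auto simp: cadd_def coset_def)
    have "sdiff b1 b2 \<in> B" using assms b by (auto simp: Z2_subspace_def)
    moreover have "x = sdiff (sdiff z1 z2) (sdiff b1 b2)" using b by (auto simp: sdiff_def)
    ultimately show "x \<in> coset B (sdiff z1 z2)" by (auto simp: coset_def)
  qed
next
  show "coset B (sdiff z1 z2) \<subseteq> cadd (coset B z1) (coset B z2)"
  proof
    fix x assume "x \<in> coset B (sdiff z1 z2)"
    then obtain b where b: "b \<in> B" "x = sdiff (sdiff z1 z2) b" by (auto simp: coset_def)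
    have "sdiff z1 b \<in> coset B z1" using b by (auto simp: coset_def)
    moreover have "z2 \<in> coset B z2"
      using assms by (simp add: mem_coset_self Z2_subspace_def)
    moreover have "x = sdiff (sdiff z1 b) z2" using b by (auto simp: sdiff_def)
    ultimately show "x \<in> cadd (coset B z1) (coset B z2)" unfolding cadd_def by blast
  qed
qed

definition induced_class_map :: "'b set set \<Rightarrow> ('a set \<Rightarrow> 'b set) \<Rightarrow> 'a set set \<Rightarrow> 'b set set" where
  "induced_class_map B f c = (\<Union>x\<in>c. coset B (f x))"

lemma induced_class_map_coset:
  assumes "Z2_subspace B'" "{} \<in> B" "Z2_linear f" "f ` B \<subseteq> B'"
  shows "induced_class_map B' f (coset B z) = coset B' (f z)"
proof -
  have "coset B' (f x) = coset B' (f z)" if "x \<in> coset B z" for x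
  proof -
    from that obtain b where "b \<in> B" "x = sdiff z b" by (auto simp: coset_def)
    then show ?thesis
      using assms coset_sdiff_member[of B' "f b" "f z"] by (auto simp: Z2_linear_def)
  qed
  moreover have "z \<in> coset B z"
    using \<open>{} \<in> B\<close> by (rule mem_coset_self)
  ultimately show ?thesis
    unfolding induced_class_map_def by blast
qed

lemma card_sdiff_odd_iff:
  assumes "finite A" "finite B"
  shows "odd (card (sdiff A B)) \<longleftrightarrow> odd (card A) \<noteq> odd (card B)"
proof -
  have "sdiff A B = (A \<union> B) - (A \<inter> B)"
    by (auto simp: sdiff_def)
  then have "card (sdiff A B) = card (A \<union> B) - card (A \<inter> B)"
    by (metis card_Diff_subset assms finite_Int Int_lower1 le_supI1)
  moreover have "card (A \<inter> B) \<le> card (A \<union> B)"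
    using assms by (intro card_mono) auto
  moreover have "card A + card B = card (A \<union> B) + card (A \<inter> B)"
    using card_Un_Int assms by blast
  ultimately show ?thesis by presburger
qed

lemma lin_map_sdiff:
  assumes "finite A" "finite B"
  shows "lin_map d e (sdiff A B) = sdiff (lin_map d e A) (lin_map d e B)"
proof (rule set_eqI)
  fix p
  let ?P = "\<lambda>q. p \<in> lin_diff d e q"
  have "{q \<in> sdiff A B. ?P q} = sdiff {q \<in> A. ?P q} {q \<in> B. ?P q}"
    by (auto simp: sdiff_def)
  then have "odd (card {q \<in> sdiff A B. ?P q}) \<longleftrightarrow>
      odd (card {q \<in> A. ?P q}) \<noteq> odd (card {q \<in> B. ?P q})"
    using assms by (simp add: card_sdiff_odd_iff)
  then show "p \<in> lin_map d e (sdiff A B) \<longleftrightarrow> p \<in> sdiff (lin_map d e A) (lin_map d e B)"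
    by (auto simp: lin_map_def sdiff_def)
qed

lemma lin_map_empty [simp]: "lin_map d e {} = {}"
  by (simp add: lin_map_def)

lemma chains_mono: "t \<le> t' \<Longrightarrow> chains G gr h m t \<subseteq> chains G gr h m t'"
  by (auto simp: chains_def)

lemma bdries_mono: "t \<le> t' \<Longrightarrow> bdries G gr d h e m t \<subseteq> bdries G gr d h e m t'"
  unfolding bdries_def by (intro image_mono chains_mono)

lemma empty_in_bdries: "{} \<in> bdries G gr d h e m t"
  by (force simp: bdries_def chains_def)

lemma Z2_subspace_bdries:
  assumes "finite G"
  shows "Z2_subspace (bdries G gr d h e m t)"
  unfolding Z2_subspace_def
proof (intro conjI ballI)
  show "{} \<in> bdries G gr d h e m t"
    by (rule empty_in_bdries)
next
  fix x y assume "x \<in> bdries G gr d h e m t" "y \<in> bdries G gr d h e m t"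
  then obtain a b where ab: "a \<in> chains G gr h (m+1) t" "b \<in> chains G gr h (m+1) t"
    "x = lin_map d e a" "y = lin_map d e b" by (auto simp: bdries_def)
  then have "finite a" "finite b"
    using assms by (auto simp: chains_def intro: finite_subset)
  then have "sdiff x y = lin_map d e (sdiff a b)"
    by (simp add: lin_map_sdiff ab)
  moreover have "sdiff a b \<in> chains G gr h (m+1) t"
    using ab by (auto simp: chains_def sdiff_def)
  ultimately show "sdiff x y \<in> bdries G gr d h e m t" by (auto simp: bdries_def)
qed

lemma lin_transfer_eq_induced_class_map:
  "lin_transfer G gr d h e m t t' = induced_class_map (bdries G gr d h e m t') id"
  by (simp add: fun_eq_iff lin_transfer_def induced_class_map_def)

lemma lin_transfer_coset:
  assumes "finite G" "t \<le> t'"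
  shows "lin_transfer G gr d h e m t t' (coset (bdries G gr d h e m t) z)
    = coset (bdries G gr d h e m t') z"
proof -
  have "induced_class_map (bdries G gr d h e m t') id (coset (bdries G gr d h e m t) z)
      = coset (bdries G gr d h e m t') (id z)"
    by (intro induced_class_map_coset Z2_subspace_bdries Z2_linear_id empty_in_bdries)
      (simp_all add: assms bdries_mono)
  then show ?thesis
    by (simp add: lin_transfer_eq_induced_class_map)
qed

lemma lin_homology_cases:
  assumes "c \<in> lin_homology G gr d h e m t"
  obtains z where "z \<in> cycles G gr d h e m t" "c = coset (bdries G gr d h e m t) z"
  using assms by (auto simp: lin_homology_def)

locale lin_chain_map =
  fixes G\<^sub>1 :: "'a set" and gr\<^sub>1 :: "'a \<Rightarrow> int" and d\<^sub>1 :: "'a \<Rightarrow> 'a alg"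
    and h\<^sub>1 :: "'a \<Rightarrow> real" and e\<^sub>1 :: "'a \<Rightarrow> bool"
    and G\<^sub>2 :: "'b set" and gr\<^sub>2 :: "'b \<Rightarrow> int" and d\<^sub>2 :: "'b \<Rightarrow> 'b alg"
    and h\<^sub>2 :: "'b \<Rightarrow> real" and e\<^sub>2 :: "'b \<Rightarrow> bool"
    and f :: "'a set \<Rightarrow> 'b set"
  assumes finite_source: "finite G\<^sub>1"
    and finite_target: "finite G\<^sub>2"
    and linear: "Z2_linear f"
    and maps_chains: "S \<in> chains G\<^sub>1 gr\<^sub>1 h\<^sub>1 n t \<Longrightarrow> f S \<in> chains G\<^sub>2 gr\<^sub>2 h\<^sub>2 n t"
    and commutes: "f (lin_map d\<^sub>1 e\<^sub>1 S) = lin_map d\<^sub>2 e\<^sub>2 (f S)"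
begin

lemma maps_bdries:
  assumes "t \<le> s"
  shows "f ` bdries G\<^sub>1 gr\<^sub>1 d\<^sub>1 h\<^sub>1 e\<^sub>1 m t \<subseteq> bdries G\<^sub>2 gr\<^sub>2 d\<^sub>2 h\<^sub>2 e\<^sub>2 m s"
  using maps_chains chains_mono[OF assms] by (force simp: bdries_def commutes)

lemma maps_cycles:
  assumes "t \<le> s"
  shows "f ` cycles G\<^sub>1 gr\<^sub>1 d\<^sub>1 h\<^sub>1 e\<^sub>1 m t \<subseteq> cycles G\<^sub>2 gr\<^sub>2 d\<^sub>2 h\<^sub>2 e\<^sub>2 m s"
  using maps_chains chains_mono[OF assms] Z2_linear_empty[OF linear]
  by (force simp: cycles_def simp flip: commutes)

lemma induced_coset:
  assumes "t \<le> s"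
  shows "induced_class_map (bdries G\<^sub>2 gr\<^sub>2 d\<^sub>2 h\<^sub>2 e\<^sub>2 m s) f (coset (bdries G\<^sub>1 gr\<^sub>1 d\<^sub>1 h\<^sub>1 e\<^sub>1 m t) z)
    = coset (bdries G\<^sub>2 gr\<^sub>2 d\<^sub>2 h\<^sub>2 e\<^sub>2 m s) (f z)"
  by (intro induced_class_map_coset Z2_subspace_bdries finite_target empty_in_bdries linear
      maps_bdries assms)

lemma induced_in_lin_homology:
  assumes "t \<le> s" "c \<in> lin_homology G\<^sub>1 gr\<^sub>1 d\<^sub>1 h\<^sub>1 e\<^sub>1 m t"
  shows "induced_class_map (bdries G\<^sub>2 gr\<^sub>2 d\<^sub>2 h\<^sub>2 e\<^sub>2 m s) f c \<in> lin_homology G\<^sub>2 gr\<^sub>2 d\<^sub>2 h\<^sub>2 e\<^sub>2 m s"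
  using assms(2)
proof (cases rule: lin_homology_cases)
  case (1 z)
  then show ?thesis
    using maps_cycles[OF assms(1)] by (auto simp: induced_coset[OF assms(1)] lin_homology_def)
qed

lemma induced_additive:
  assumes "t \<le> s"
  shows "additive_on (lin_homology G\<^sub>1 gr\<^sub>1 d\<^sub>1 h\<^sub>1 e\<^sub>1 m t)
    (induced_class_map (bdries G\<^sub>2 gr\<^sub>2 d\<^sub>2 h\<^sub>2 e\<^sub>2 m s) f)"
  using linear
  by (auto simp: additive_on_def lin_homology_def induced_coset[OF assms] Z2_linear_def
      cadd_coset Z2_subspace_bdries finite_source finite_target)

lemma induced_commutes_transfer:
  assumes "t \<le> t'" "s \<le> s'" "t \<le> s" "t' \<le> s'"
    and "c \<in> lin_homology G\<^sub>1 gr\<^sub>1 d\<^sub>1 h\<^sub>1 e\<^sub>1 m t"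
  shows "induced_class_map (bdries G\<^sub>2 gr\<^sub>2 d\<^sub>2 h\<^sub>2 e\<^sub>2 m s') f (lin_transfer G\<^sub>1 gr\<^sub>1 d\<^sub>1 h\<^sub>1 e\<^sub>1 m t t' c)
    = lin_transfer G\<^sub>2 gr\<^sub>2 d\<^sub>2 h\<^sub>2 e\<^sub>2 m s s' (induced_class_map (bdries G\<^sub>2 gr\<^sub>2 d\<^sub>2 h\<^sub>2 e\<^sub>2 m s) f c)"
  using assms(5)
proof (cases rule: lin_homology_cases)
  case (1 z)
  then show ?thesis
    using assms by (simp add: induced_coset lin_transfer_coset finite_source finite_target)
qed

end

lemma induced_class_map_comp_eq_transfer:
  assumes f: "lin_chain_map G\<^sub>1 gr\<^sub>1 d\<^sub>1 h\<^sub>1 e\<^sub>1 G\<^sub>2 gr\<^sub>2 d\<^sub>2 h\<^sub>2 e\<^sub>2 f"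
    and g: "lin_chain_map G\<^sub>2 gr\<^sub>2 d\<^sub>2 h\<^sub>2 e\<^sub>2 G\<^sub>1 gr\<^sub>1 d\<^sub>1 h\<^sub>1 e\<^sub>1 g"
    and "0 \<le> \<delta>"
    and gf: "\<And>z. z \<in> cycles G\<^sub>1 gr\<^sub>1 d\<^sub>1 h\<^sub>1 e\<^sub>1 m t \<Longrightarrow>
      coset (bdries G\<^sub>1 gr\<^sub>1 d\<^sub>1 h\<^sub>1 e\<^sub>1 m (t + 2 * \<delta>)) (g (f z))
        = coset (bdries G\<^sub>1 gr\<^sub>1 d\<^sub>1 h\<^sub>1 e\<^sub>1 m (t + 2 * \<delta>)) z"
    and c: "c \<in> lin_homology G\<^sub>1 gr\<^sub>1 d\<^sub>1 h\<^sub>1 e\<^sub>1 m t"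
  shows "induced_class_map (bdries G\<^sub>1 gr\<^sub>1 d\<^sub>1 h\<^sub>1 e\<^sub>1 m (t + \<delta> + \<delta>)) g
      (induced_class_map (bdries G\<^sub>2 gr\<^sub>2 d\<^sub>2 h\<^sub>2 e\<^sub>2 m (t + \<delta>)) f c)
    = lin_transfer G\<^sub>1 gr\<^sub>1 d\<^sub>1 h\<^sub>1 e\<^sub>1 m t (t + 2 * \<delta>) c"
  using c
proof (cases rule: lin_homology_cases)
  case (1 z)
  interpret f: lin_chain_map G\<^sub>1 gr\<^sub>1 d\<^sub>1 h\<^sub>1 e\<^sub>1 G\<^sub>2 gr\<^sub>2 d\<^sub>2 h\<^sub>2 e\<^sub>2 f by (rule f)
  interpret g: lin_chain_map G\<^sub>2 gr\<^sub>2 d\<^sub>2 h\<^sub>2 e\<^sub>2 G\<^sub>1 gr\<^sub>1 d\<^sub>1 h\<^sub>1 e\<^sub>1 g by (rule g)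
  have double_shift: "t + \<delta> + \<delta> = t + 2 * \<delta>"
    by simp
  show ?thesis
    unfolding double_shift using 1 gf \<open>0 \<le> \<delta>\<close>
    by (simp add: f.induced_coset g.induced_coset lin_transfer_coset f.finite_source)
qed

lemma interleaved_by_chain_maps:
  assumes f: "lin_chain_map G\<^sub>1 gr\<^sub>1 d\<^sub>1 h\<^sub>1 e\<^sub>1 G\<^sub>2 gr\<^sub>2 d\<^sub>2 h\<^sub>2 e\<^sub>2 f"
    and g: "lin_chain_map G\<^sub>2 gr\<^sub>2 d\<^sub>2 h\<^sub>2 e\<^sub>2 G\<^sub>1 gr\<^sub>1 d\<^sub>1 h\<^sub>1 e\<^sub>1 g"
    and "0 \<le> \<delta>"
    and gf: "\<And>t z. z \<in> cycles G\<^sub>1 gr\<^sub>1 d\<^sub>1 h\<^sub>1 e\<^sub>1 m t \<Longrightarrow>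
      coset (bdries G\<^sub>1 gr\<^sub>1 d\<^sub>1 h\<^sub>1 e\<^sub>1 m (t + 2 * \<delta>)) (g (f z))
        = coset (bdries G\<^sub>1 gr\<^sub>1 d\<^sub>1 h\<^sub>1 e\<^sub>1 m (t + 2 * \<delta>)) z"
    and fg: "\<And>t z. z \<in> cycles G\<^sub>2 gr\<^sub>2 d\<^sub>2 h\<^sub>2 e\<^sub>2 m t \<Longrightarrow>
      coset (bdries G\<^sub>2 gr\<^sub>2 d\<^sub>2 h\<^sub>2 e\<^sub>2 m (t + 2 * \<delta>)) (f (g z))
        = coset (bdries G\<^sub>2 gr\<^sub>2 d\<^sub>2 h\<^sub>2 e\<^sub>2 m (t + 2 * \<delta>)) z"
  shows "interleaved \<delta>
    (lin_homology G\<^sub>1 gr\<^sub>1 d\<^sub>1 h\<^sub>1 e\<^sub>1 m) (lin_transfer G\<^sub>1 gr\<^sub>1 d\<^sub>1 h\<^sub>1 e\<^sub>1 m)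
    (lin_homology G\<^sub>2 gr\<^sub>2 d\<^sub>2 h\<^sub>2 e\<^sub>2 m) (lin_transfer G\<^sub>2 gr\<^sub>2 d\<^sub>2 h\<^sub>2 e\<^sub>2 m)"
proof -
  interpret f: lin_chain_map G\<^sub>1 gr\<^sub>1 d\<^sub>1 h\<^sub>1 e\<^sub>1 G\<^sub>2 gr\<^sub>2 d\<^sub>2 h\<^sub>2 e\<^sub>2 f by (rule f)
  interpret g: lin_chain_map G\<^sub>2 gr\<^sub>2 d\<^sub>2 h\<^sub>2 e\<^sub>2 G\<^sub>1 gr\<^sub>1 d\<^sub>1 h\<^sub>1 e\<^sub>1 g by (rule g)
  have shift: "t \<le> t + \<delta>" for t
    using \<open>0 \<le> \<delta>\<close> by simp
  show ?thesis
    unfolding interleaved_def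
    by (rule exI[of _ "\<lambda>t. induced_class_map (bdries G\<^sub>2 gr\<^sub>2 d\<^sub>2 h\<^sub>2 e\<^sub>2 m (t + \<delta>)) f"],
        rule exI[of _ "\<lambda>t. induced_class_map (bdries G\<^sub>1 gr\<^sub>1 d\<^sub>1 h\<^sub>1 e\<^sub>1 m (t + \<delta>)) g"],
        intro conjI allI impI ballI f.induced_in_lin_homology g.induced_in_lin_homology
        f.induced_additive g.induced_additive f.induced_commutes_transfer
        g.induced_commutes_transfer induced_class_map_comp_eq_transfer[OF f g]
        induced_class_map_comp_eq_transfer[OF g f] assms shift)
      (simp_all add: \<open>0 \<le> \<delta>\<close>)
qed

lemma lin_diff_stab_Inl:
  "lin_diff (stab_diff d) (stab_aug eps) (Inl q) = Inl ` lin_diff d eps q"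
proof -
  let ?W = "\<lambda>D e p. {(w, j). w \<in> D \<and> j < length w \<and> w ! j = p \<and>
    (\<forall>i<length w. i \<noteq> j \<longrightarrow> e (w ! i))}"
  have "?W (map Inl ` d q) (stab_aug eps) (Inl p) = (\<lambda>(w, j). (map Inl w, j)) ` ?W (d q) eps p" for p
    by (fastforce simp: stab_aug_def image_iff)
  moreover have "inj_on (\<lambda>(w :: 'a list, j :: nat). (map Inl w :: ('a + bool) list, j)) X" for X
    by (auto simp: inj_on_def)
  ultimately have card_Inl:
      "card (?W (map Inl ` d q) (stab_aug eps) (Inl p)) = card (?W (d q) eps p)" for p
    by (simp add: card_image)
  have no_Inr: "?W (map Inl ` d q) (stab_aug eps) (Inr b) = {}" for b
    by auto
  show ?thesis
  proof (rule set_eqI)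
    fix x :: "'a + bool"
    show "x \<in> lin_diff (stab_diff d) (stab_aug eps) (Inl q) \<longleftrightarrow> x \<in> Inl ` lin_diff d eps q"
      by (cases x) (auto simp: lin_diff_def stab_diff_def card_Inl no_Inr)
  qed
qed

lemma lin_diff_stab_Inr:
  "lin_diff (stab_diff d) (stab_aug eps) (Inr b) = (if b then {Inr False} else {})"
proof -
  have "{(w, j). w \<in> stab_diff d (Inr True) \<and> j < length w \<and> w ! j = p \<and>
      (\<forall>i<length w. i \<noteq> j \<longrightarrow> stab_aug eps (w ! i))}
    = (if p = Inr False then {([Inr False], 0)} else {})" for p
    by (auto simp: stab_diff_def nth_Cons split: nat.splits)
  then show ?thesis
    by (cases b) (auto simp: lin_diff_def stab_diff_def)
qed

lemma mem_lin_diff_stab_iff: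
  "p \<in> lin_diff (stab_diff d) (stab_aug eps) x \<longleftrightarrow>
    (\<exists>q r. x = Inl q \<and> p = Inl r \<and> r \<in> lin_diff d eps q) \<or> (x = Inr True \<and> p = Inr False)"
  by (cases x) (auto simp: lin_diff_stab_Inl lin_diff_stab_Inr)

lemma lin_map_stab_diff:
  "lin_map (stab_diff d) (stab_aug eps) S
    = Inl ` lin_map d eps (Inl -` S) \<union> (if Inr True \<in> S then {Inr False} else {})"
proof (rule set_eqI)
  fix p :: "'a + bool"
  let ?hits = "{x \<in> S. p \<in> lin_diff (stab_diff d) (stab_aug eps) x}"
  show "p \<in> lin_map (stab_diff d) (stab_aug eps) S \<longleftrightarrow>
    p \<in> Inl ` lin_map d eps (Inl -` S) \<union> (if Inr True \<in> S then {Inr False} else {})"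
  proof (cases p)
    case (Inl r)
    then have "?hits = Inl ` {q \<in> Inl -` S. r \<in> lin_diff d eps q}"
      by (auto simp: mem_lin_diff_stab_iff)
    then have "card ?hits = card {q \<in> Inl -` S. r \<in> lin_diff d eps q}"
      by (simp add: card_image)
    then show ?thesis
      using Inl by (auto simp: lin_map_def)
  next
    case (Inr b)
    then have "?hits = (if \<not> b \<and> Inr True \<in> S then {Inr True} else {})"
      by (auto simp: mem_lin_diff_stab_iff)
    then show ?thesis
      using Inr by (auto simp: lin_map_def)
  qed
qed

lemma lin_chain_map_image_Inl:
  assumes "finite G" "\<forall>q\<in>G. h' (Inl q) = h q"
  shows "lin_chain_map G gr d h eps
    (stab_gens G) (stab_grading gr k) (stab_diff d) h' (stab_aug eps) (image Inl)"
proof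
  show "finite (stab_gens G)"
    using assms(1) by (simp add: stab_gens_def)
  show "Inl ` S \<in> chains (stab_gens G) (stab_grading gr k) h' n t" if "S \<in> chains G gr h n t" for S n t
    using that assms(2) by (auto simp: chains_def stab_gens_def stab_grading_def)
  show "Inl ` lin_map d eps S = lin_map (stab_diff d) (stab_aug eps) (Inl ` S)" for S
    by (auto simp: lin_map_stab_diff inj_vimage_image_eq)
qed (use assms(1) Z2_linear_image_Inl in auto)

lemma lin_chain_map_vimage_Inl:
  assumes "finite G" "\<forall>q\<in>G. h' (Inl q) = h q"
  shows "lin_chain_map (stab_gens G) (stab_grading gr k) (stab_diff d) h' (stab_aug eps)
    G gr d h eps (vimage Inl)"
proof
  show "finite (stab_gens G)"
    using assms(1) by (simp add: stab_gens_def)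
  show "Inl -` S \<in> chains G gr h n t" if "S \<in> chains (stab_gens G) (stab_grading gr k) h' n t"
    for S n t
    using that assms(2) by (force simp: chains_def stab_gens_def stab_grading_def)
  show "Inl -` lin_map (stab_diff d) (stab_aug eps) S = lin_map d eps (Inl -` S)" for S
    by (auto simp: lin_map_stab_diff)
qed (use assms(1) Z2_linear_vimage_Inl in auto)

lemma stab_cycle_homologous_Inl_part:
  fixes z :: "('g + bool) set"
  assumes "finite G" and gap: "h' (Inr True) \<le> h' (Inr False) + s"
    and z: "z \<in> cycles (stab_gens G) (stab_grading gr k) (stab_diff d) h' (stab_aug eps) m t"
  shows "coset (bdries (stab_gens G) (stab_grading gr k) (stab_diff d) h' (stab_aug eps) m (t + s))
      (Inl ` Inl -` z)
    = coset (bdries (stab_gens G) (stab_grading gr k) (stab_diff d) h' (stab_aug eps) m (t + s)) z"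
proof -
  let ?B = "bdries (stab_gens G) (stab_grading gr k) (stab_diff d) h' (stab_aug eps) m (t + s)"
  have z_chain: "z \<in> chains (stab_gens G) (stab_grading gr k) h' m t"
    and z_closed: "lin_map (stab_diff d) (stab_aug eps) z = {}"
    using z by (simp_all add: cycles_def)
  have "Inr True \<notin> z"
  proof
    assume "Inr True \<in> z"
    then have "Inr False \<in> lin_map (stab_diff d) (stab_aug eps) z"
      by (simp add: lin_map_stab_diff)
    with z_closed show False
      by simp
  qed
  then have Inl_part: "Inl ` Inl -` z = sdiff z (z \<inter> {Inr False})"
    by (auto simp: sdiff_def) (metis (full_types) rangeI sumE)
  have "z \<inter> {Inr False} \<in> ?B"
  proof (cases "Inr False \<in> z")
    case True
    then have "stab_grading gr k (Inr False) = m" "h' (Inr False) \<le> t"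
      using z_chain by (auto simp: chains_def)
    then have "{Inr True} \<in> chains (stab_gens G) (stab_grading gr k) h' (m + 1) (t + s)"
      using gap by (simp add: chains_def stab_gens_def stab_grading_def)
    moreover have "z \<inter> {Inr False} = lin_map (stab_diff d) (stab_aug eps) {Inr True}"
    proof -
      have "Inl -` {Inr True} = ({} :: 'g set)"
        by blast
      then show ?thesis
        using True by (auto simp: lin_map_stab_diff)
    qed
    ultimately show ?thesis
      unfolding bdries_def by (rule rev_image_eqI)
  qed (simp add: empty_in_bdries)
  then show ?thesis
    unfolding Inl_part using assms(1)
    by (intro coset_sdiff_member Z2_subspace_bdries) (simp add: stab_gens_def)
qed

theorem proposition4p5:
  fixes G :: "'g set" and gr :: "'g \<Rightarrow> int" and d :: "'g \<Rightarrow> 'g alg"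
    and h :: "'g \<Rightarrow> real" and eps :: "'g \<Rightarrow> bool"
    and k :: int and \<delta> :: real and h' :: "'g + bool \<Rightarrow> real"
  assumes dga: "filtered_CE_DGA G gr d h"
    and aug: "augmentation G gr d eps"
    and k_pos: "0 < k"
    and delta_pos: "0 < \<delta>"
    and h'_ext: "\<forall>q\<in>G. h' (Inl q) = h q"
    and h'_pos: "0 < h' (Inr False)"
    and gap_pos: "0 < h' (Inr True) - h' (Inr False)"
    and gap_small: "h' (Inr True) - h' (Inr False) < 2 * \<delta>"
  shows "\<forall>m::int. interleaved \<delta>
           (lin_homology G gr d h eps m) (lin_transfer G gr d h eps m)
           (lin_homology (stab_gens G) (stab_grading gr k) (stab_diff d) h' (stab_aug eps) m)
           (lin_transfer (stab_gens G) (stab_grading gr k) (stab_diff d) h' (stab_aug eps) m)"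
proof
  fix m :: int
  have fin: "finite G"
    using dga by (simp add: filtered_CE_DGA_def)
  show "interleaved \<delta>
           (lin_homology G gr d h eps m) (lin_transfer G gr d h eps m)
           (lin_homology (stab_gens G) (stab_grading gr k) (stab_diff d) h' (stab_aug eps) m)
           (lin_transfer (stab_gens G) (stab_grading gr k) (stab_diff d) h' (stab_aug eps) m)"
  proof (rule interleaved_by_chain_maps[OF lin_chain_map_image_Inl[OF fin h'_ext]
        lin_chain_map_vimage_Inl[OF fin h'_ext]])
    show "0 \<le> \<delta>"
      using delta_pos by simp
    show "coset B (Inl -` Inl ` z) = coset B z" for B and z :: "'g set"
      by (simp add: vimage_image_eq)
    show "coset (bdries (stab_gens G) (stab_grading gr k) (stab_diff d) h' (stab_aug eps) m
          (t + 2 * \<delta>)) (Inl ` Inl -` z)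
        = coset (bdries (stab_gens G) (stab_grading gr k) (stab_diff d) h' (stab_aug eps) m
          (t + 2 * \<delta>)) z"
      if "z \<in> cycles (stab_gens G) (stab_grading gr k) (stab_diff d) h' (stab_aug eps) m t" for t z
      using stab_cycle_homologous_Inl_part[OF fin _ that] gap_small by simp
  qed
qed

end
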